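(* Let $C\ge0$. If a knowledge state algorithm $\mathcal A$ is $C$-competitive as a knowledge state algorithm, then $\mathcal A$ is $C$-competitive, i.e. there is a constant $K$ with $E(\mathrm{cost}_{\mathcal A}(\varrho))\le C\cdot\mathrm{cost}_{\mathrm{opt}}(\varrho)+K$ for every finite request sequence $\varrho$.
   Context: Online problem: a set $\mathcal X$ of states, a set $\mathcal R$ of requests, a start state $s^0$, a function $d:\mathcal X\times\mathcal X\to[0,\infty)$ with $d(x,x)=0$ and $d(x,z)\le d(x,y)+d(y,z)$, and $\mathrm{cost}:\mathcal X\times\mathcal R\times\mathcal X\to[0,\infty)$ with $\mathrm{cost}(u,r,v)\le d(u,x)+\mathrm{cost}(x,r,y)+d(y,v)$. For $\varrho=r^1\dots r^n$, $\mathrm{cost}_{\mathrm{opt}}(\varrho)$ is the infimum of $\sum_{t=1}^n\mathrm{cost}(x^{t-1},r^t,x^t)$ over all $x^1,\dots,x^n$ with $x^0=s^0$. $\Pi$ is the set of finitely supported probability distributions on $\mathcal X$; $\mathrm{cost}(\pi,r,\pi')$ is the minimum transportation cost $\min_\gamma\sum_{x,y}\gamma(x,y)\mathrm{cost}(x,r,y)$ over distributions $\gamma$ on $\mathrm{supp}(\pi)\times\mathrm{supp}(\pi')$ with marginals $\pi,\pi'$. An estimator is a function $\omega:\mathcal X\to[0,\infty)$ with $\omega(y)\le\omega(x)+d(x,y)$ for all $x,y$. The update operator is $(\omega\wedge r)(y)=\inf_{x\in\mathcal X}\{\omega(x)+\mathrm{cost}(x,r,y)\}$. Knowledge state algorithm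 $\mathcal A$: a knowledge state is a pair $k=(\pi,\omega)$ with $\pi\in\Pi$ and $\omega$ an estimator. The initial knowledge state is $k^0=(s^0,\omega^0)$ with $\omega^0$ an estimator satisfying $\omega^0(s^0)=0$ (e.g. $\omega^0=d(s^0,\cdot)$). For each knowledge state $k=(\pi,\omega)$ and request $r$, $\mathcal A$ specifies finitely many subsequent knowledge states $k_i=(\pi_i,\omega_i)$ with weights $\lambda_i>0$, $\sum_i\lambda_i=1$, and a real number $\mathrm{adjust}_{\mathcal A}(k,r)$ such that $(\omega\wedge r)(x)\ge\mathrm{adjust}_{\mathcal A}(k,r)+\sum_i\lambda_i\omega_i(x)$ for all $x\in\mathcal X$. On request sequence $r^1\dots r^n$, $k^t$ is chosen among the subsequents of $(k^{t-1},r^t)$, equal to $k_i$ with probability $\lambda_i$. Step cost $\mathrm{cost}_{\mathcal A}(k,r)=\mathrm{cost}(\pi,r,\sum_i\lambda_i\pi_i)$; $\mathrm{cost}_{\mathcal A}(\varrho)=\sum_t\mathrm{cost}_{\mathcal A}(k^{t-1},r^t)$ and $\mathrm{adjust}_{\mathcal A}(\varrho)=\sum_t\mathrm{adjust}_{\mathcal A}(k^{t-1},r^t)$. Writing $k^n=(\pi^n,\omega^n)$, $\mathcal A$ is $C$-competitive as a knowledge state algorithm if there is a constant $K$ with $E(\mathrm{cost}_{\mathcal A}(\varrho))\le C\cdot E(\mathrm{adjust}_{\mathcal A}(\varrho)+\omega^n(x))+K$ for every request sequence $\varrho=r^1\dots r^n$ and every $x\in\mathcal X$. *)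

theory Defs
  imports "HOL-Probability.Probability"
begin

text \<open>Knowledge states are pairs (pi, omega) with pi a (finitely supported) pmf on
states and omega an estimator. A knowledge state algorithm is given by a function
step mapping a knowledge state and a request to a (finitely supported) distribution
over subsequent knowledge states (the weights lambda_i), and a function adjust.\<close>

type_synonym ('x) kstate = "'x pmf \<times> ('x \<Rightarrow> real)"

definition estimator :: "('x \<Rightarrow> 'x \<Rightarrow> real) \<Rightarrow> ('x \<Rightarrow> real) \<Rightarrow> bool" where
  "estimator d \<omega> \<longleftrightarrow> (\<forall>x. 0 \<le> \<omega> x) \<and> (\<forall>x y. \<omega> y \<le> \<omega> x + d x y)"

definition update :: "('x \<Rightarrow> 'r \<Rightarrow> 'x \<Rightarrow> real) \<Rightarrow> ('x \<Rightarrow> real) \<Rightarrow> 'r \<Rightarrow> 'x \<Rightarrow> real" where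
  "update cost \<omega> r y = (INF x. \<omega> x + cost x r y)"

definition transport_cost :: "('x \<Rightarrow> 'r \<Rightarrow> 'x \<Rightarrow> real) \<Rightarrow> 'x pmf \<Rightarrow> 'r \<Rightarrow> 'x pmf \<Rightarrow> real" where
  "transport_cost cost \<pi> r \<pi>' =
     (INF \<gamma> \<in> {\<gamma>. map_pmf fst \<gamma> = \<pi> \<and> map_pmf snd \<gamma> = \<pi>'}.
        measure_pmf.expectation \<gamma> (\<lambda>(x, y). cost x r y))"

definition ksa_step_cost ::
  "('x \<Rightarrow> 'r \<Rightarrow> 'x \<Rightarrow> real) \<Rightarrow> ('x kstate \<Rightarrow> 'r \<Rightarrow> 'x kstate pmf) \<Rightarrow> 'x kstate \<Rightarrow> 'r \<Rightarrow> real" where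
  "ksa_step_cost cost step k r = transport_cost cost (fst k) r (bind_pmf (step k r) (\<lambda>k'. fst k'))"

fun ksa_exp_cost ::
  "('x \<Rightarrow> 'r \<Rightarrow> 'x \<Rightarrow> real) \<Rightarrow> ('x kstate \<Rightarrow> 'r \<Rightarrow> 'x kstate pmf) \<Rightarrow> 'x kstate \<Rightarrow> 'r list \<Rightarrow> real" where
  "ksa_exp_cost cost step k [] = 0"
| "ksa_exp_cost cost step k (r # rs) =
     ksa_step_cost cost step k r
     + measure_pmf.expectation (step k r) (\<lambda>k'. ksa_exp_cost cost step k' rs)"

fun ksa_exp_adjust ::
  "('x kstate \<Rightarrow> 'r \<Rightarrow> 'x kstate pmf) \<Rightarrow> ('x kstate \<Rightarrow> 'r \<Rightarrow> real) \<Rightarrow> 'x kstate \<Rightarrow> 'r list \<Rightarrow> 'x \<Rightarrow> real" where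
  "ksa_exp_adjust step adjust k [] x = snd k x"
| "ksa_exp_adjust step adjust k (r # rs) x =
     adjust k r
     + measure_pmf.expectation (step k r) (\<lambda>k'. ksa_exp_adjust step adjust k' rs x)"

fun path_cost :: "('x \<Rightarrow> 'r \<Rightarrow> 'x \<Rightarrow> real) \<Rightarrow> 'x \<Rightarrow> 'r list \<Rightarrow> 'x list \<Rightarrow> real" where
  "path_cost cost s (r # rs) (x # xs) = cost s r x + path_cost cost x rs xs"
| "path_cost cost s _ _ = 0"

definition cost_opt :: "('x \<Rightarrow> 'r \<Rightarrow> 'x \<Rightarrow> real) \<Rightarrow> 'x \<Rightarrow> 'r list \<Rightarrow> real" where
  "cost_opt cost s0 rs = (INF xs \<in> {xs. length xs = length rs}. path_cost cost s0 rs xs)"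

definition is_ksa ::
  "('x \<Rightarrow> 'x \<Rightarrow> real) \<Rightarrow> ('x \<Rightarrow> 'r \<Rightarrow> 'x \<Rightarrow> real) \<Rightarrow> ('x kstate \<Rightarrow> 'r \<Rightarrow> 'x kstate pmf)
    \<Rightarrow> ('x kstate \<Rightarrow> 'r \<Rightarrow> real) \<Rightarrow> bool" where
  "is_ksa d cost step adjust \<longleftrightarrow>
    (\<forall>\<pi> \<omega> r. finite (set_pmf \<pi>) \<and> estimator d \<omega> \<longrightarrow>
       finite (set_pmf (step (\<pi>, \<omega>) r))
       \<and> (\<forall>k' \<in> set_pmf (step (\<pi>, \<omega>) r). finite (set_pmf (fst k')) \<and> estimator d (snd k'))
       \<and> (\<forall>x. adjust (\<pi>, \<omega>) r
               + measure_pmf.expectation (step (\<pi>, \<omega>) r) (\<lambda>k'. snd k' x)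
             \<le> update cost \<omega> r x))"

definition ksa_competitive ::
  "('x \<Rightarrow> 'r \<Rightarrow> 'x \<Rightarrow> real) \<Rightarrow> ('x kstate \<Rightarrow> 'r \<Rightarrow> 'x kstate pmf) \<Rightarrow> ('x kstate \<Rightarrow> 'r \<Rightarrow> real)
    \<Rightarrow> 'x kstate \<Rightarrow> real \<Rightarrow> bool" where
  "ksa_competitive cost step adjust k0 C \<longleftrightarrow>
    (\<exists>K. \<forall>rs x. ksa_exp_cost cost step k0 rs \<le> C * ksa_exp_adjust step adjust k0 rs x + K)"

definition competitive ::
  "('x \<Rightarrow> 'r \<Rightarrow> 'x \<Rightarrow> real) \<Rightarrow> 'x \<Rightarrow> ('x kstate \<Rightarrow> 'r \<Rightarrow> 'x kstate pmf) \<Rightarrow> 'x kstate \<Rightarrow> real \<Rightarrow> bool" where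
  "competitive cost s0 step k0 C \<longleftrightarrow>
    (\<exists>K. \<forall>rs. ksa_exp_cost cost step k0 rs \<le> C * cost_opt cost s0 rs + K)"

end

theory Submission
  imports Defs
begin

(* Folding the update operator along a request sequence gives the work function
   w = omega^0 /\ r^1 /\ ... /\ r^n.  The update operator is monotone and concave in the
   estimator, so by induction along the sequence the defining inequality of a knowledge
   state algorithm yields E(adjust(rho) + omega^n(x)) <= w(x) for every x.  For any
   schedule x^1 ... x^n, the work function at its endpoint x^n is at most
   omega^0(s^0) + cost of the schedule = cost of the schedule.  Choosing x = x^n in the
   competitiveness inequality and taking the infimum over schedules gives the claim. *)

lemma update_ge:
  assumes "\<And>x r y. 0 \<le> cost x r y" and "\<And>y. b \<le> \<omega> y"
  shows "b \<le> update cost \<omega> r z"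
  unfolding update_def
  by (rule cINF_greatest) (auto intro: add_increasing2 assms)

lemma update_le:
  assumes "\<And>x r y. 0 \<le> cost x r y" and "\<And>y. b \<le> \<omega> y"
  shows "update cost \<omega> r z \<le> \<omega> y + cost y r z"
  unfolding update_def
  by (rule cINF_lower) (auto intro!: bdd_belowI[of _ b] add_increasing2 assms)

lemma update_mono:
  assumes "\<And>x r y. 0 \<le> cost x r y" and "\<And>y. b \<le> \<omega> y" and "\<And>y. \<omega> y \<le> \<omega>' y"
  shows "update cost \<omega> r z \<le> update cost \<omega>' r z"
  unfolding update_def
  by (rule cINF_mono) (auto intro!: bdd_belowI[of _ b] add_increasing2 assms add_right_mono)

lemma update_expectation_ge:
  fixes M :: "'k pmf"
  assumes cost_nonneg: "\<And>x r y. 0 \<le> cost x r y" and fin: "finite (set_pmf M)"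
    and f_nonneg: "\<And>k y. k \<in> set_pmf M \<Longrightarrow> 0 \<le> f k y"
  shows "c + measure_pmf.expectation M (\<lambda>k. update cost (f k) r z)
         \<le> update cost (\<lambda>y. c + measure_pmf.expectation M (\<lambda>k. f k y)) r z"
  unfolding update_def[of _ "\<lambda>y. _ + _ y"]
proof (rule cINF_greatest)
  fix y
  have "measure_pmf.expectation M (\<lambda>k. update cost (f k) r z)
      \<le> measure_pmf.expectation M (\<lambda>k. f k y + cost y r z)"
    by (rule integral_mono_AE)
       (auto simp: AE_measure_pmf_iff integrable_measure_pmf_finite[OF fin]
             intro: update_le[OF cost_nonneg f_nonneg])
  also have "\<dots> = measure_pmf.expectation M (\<lambda>k. f k y) + cost y r z"
    by (simp add: integrable_measure_pmf_finite[OF fin])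
  finally show "c + measure_pmf.expectation M (\<lambda>k. update cost (f k) r z)
      \<le> c + measure_pmf.expectation M (\<lambda>k. f k y) + cost y r z"
    by simp
qed simp

lemma foldl_update_ge:
  assumes "\<And>x r y. 0 \<le> cost x r y" and "\<And>y. b \<le> \<omega> y"
  shows "b \<le> foldl (update cost) \<omega> rs z"
  using assms(2)
proof (induction rs arbitrary: \<omega>)
  case (Cons r rs)
  then show ?case by (simp add: update_ge[OF assms(1)])
qed simp

lemma foldl_update_mono:
  assumes cost_nonneg: "\<And>x r y. 0 \<le> cost x r y"
    and "\<And>y. b \<le> \<omega> y" and "\<And>y. \<omega> y \<le> \<omega>' y"
  shows "foldl (update cost) \<omega> rs z \<le> foldl (update cost) \<omega>' rs z"
  using assms(2,3)
proof (induction rs arbitrary: \<omega> \<omega>')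
  case (Cons r rs)
  have "\<And>y. b \<le> update cost \<omega> r y"
    by (rule update_ge[OF cost_nonneg Cons.prems(1)])
  moreover have "\<And>y. update cost \<omega> r y \<le> update cost \<omega>' r y"
    by (rule update_mono[OF cost_nonneg Cons.prems])
  ultimately show ?case using Cons.IH by simp
qed simp

lemma expectation_nonneg_pmf:
  fixes f :: "'k \<Rightarrow> real"
  assumes "\<And>k. k \<in> set_pmf M \<Longrightarrow> 0 \<le> f k"
  shows "0 \<le> measure_pmf.expectation M f"
  by (rule integral_nonneg_AE) (simp add: AE_measure_pmf_iff assms)

lemma foldl_update_expectation_ge:
  fixes M :: "'k pmf"
  assumes cost_nonneg: "\<And>x r y. 0 \<le> cost x r y" and fin: "finite (set_pmf M)"
    and "\<And>k y. k \<in> set_pmf M \<Longrightarrow> 0 \<le> f k y"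
  shows "c + measure_pmf.expectation M (\<lambda>k. foldl (update cost) (f k) rs z)
         \<le> foldl (update cost) (\<lambda>y. c + measure_pmf.expectation M (\<lambda>k. f k y)) rs z"
  using assms(3)
proof (induction rs arbitrary: f)
  case (Cons r rs)
  let ?g = "\<lambda>k. update cost (f k) r"
  have g_nonneg: "\<And>k y. k \<in> set_pmf M \<Longrightarrow> 0 \<le> ?g k y"
    by (rule update_ge[OF cost_nonneg Cons.prems])
  have "c + measure_pmf.expectation M (\<lambda>k. foldl (update cost) (?g k) rs z)
      \<le> foldl (update cost) (\<lambda>y. c + measure_pmf.expectation M (\<lambda>k. ?g k y)) rs z"
    by (rule Cons.IH[OF g_nonneg])
  also have "\<dots> \<le> foldl (update cost)
      (update cost (\<lambda>y. c + measure_pmf.expectation M (\<lambda>k. f k y)) r) rs z"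
    by (rule foldl_update_mono[OF cost_nonneg, of c])
       (simp_all add: expectation_nonneg_pmf g_nonneg
          update_expectation_ge[OF cost_nonneg fin Cons.prems])
  finally show ?case by simp
qed simp

lemma ksa_exp_adjust_le_foldl_update:
  assumes cost_nonneg: "\<And>x r y. 0 \<le> cost x r y" and ksa: "is_ksa d cost step adjust"
    and "finite (set_pmf (fst k))" and "estimator d (snd k)"
  shows "ksa_exp_adjust step adjust k rs x \<le> foldl (update cost) (snd k) rs x"
  using assms(3,4)
proof (induction rs arbitrary: k)
  case (Cons r rs)
  obtain \<pi> \<omega> where k: "k = (\<pi>, \<omega>)" by fastforce
  let ?M = "step k r"
  have fin: "finite (set_pmf ?M)"
    and succ: "\<And>k'. k' \<in> set_pmf ?M \<Longrightarrow> finite (set_pmf (fst k')) \<and> estimator d (snd k')"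
    and invariant: "\<And>y. adjust k r + measure_pmf.expectation ?M (\<lambda>k'. snd k' y)
                          \<le> update cost \<omega> r y"
    using ksa Cons.prems unfolding is_ksa_def k by auto
  have succ_nonneg: "\<And>k' y. k' \<in> set_pmf ?M \<Longrightarrow> 0 \<le> snd k' y"
    using succ unfolding estimator_def by auto
  have "ksa_exp_adjust step adjust k (r # rs) x
      = adjust k r + measure_pmf.expectation ?M (\<lambda>k'. ksa_exp_adjust step adjust k' rs x)"
    by simp
  also have "\<dots> \<le> adjust k r
      + measure_pmf.expectation ?M (\<lambda>k'. foldl (update cost) (snd k') rs x)"
    using succ Cons.IH
    by (auto intro!: integral_mono_AE
             simp: AE_measure_pmf_iff integrable_measure_pmf_finite[OF fin])
  also have "\<dots> \<le> foldl (update cost)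
      (\<lambda>y. adjust k r + measure_pmf.expectation ?M (\<lambda>k'. snd k' y)) rs x"
    by (rule foldl_update_expectation_ge[OF cost_nonneg fin succ_nonneg])
  also have "\<dots> \<le> foldl (update cost) (update cost \<omega> r) rs x"
    by (rule foldl_update_mono[OF cost_nonneg, of "adjust k r"])
       (simp_all add: expectation_nonneg_pmf succ_nonneg invariant)
  finally show ?case by (simp add: k)
qed simp

lemma foldl_update_le_path_cost:
  assumes cost_nonneg: "\<And>x r y. 0 \<le> cost x r y"
    and "\<And>y. 0 \<le> \<omega> y" and "length xs = length rs"
  shows "foldl (update cost) \<omega> rs (last (s # xs)) \<le> \<omega> s + path_cost cost s rs xs"
  using assms(2,3)
proof (induction rs arbitrary: xs \<omega> s)
  case (Cons r rs)
  then obtain x xs' where xs: "xs = x # xs'" and len: "length xs' = length rs"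
    by (cases xs) auto
  have "foldl (update cost) (update cost \<omega> r) rs (last (x # xs'))
      \<le> update cost \<omega> r x + path_cost cost x rs xs'"
    by (rule Cons.IH[OF update_ge[OF cost_nonneg Cons.prems(1)] len])
  also have "\<dots> \<le> \<omega> s + cost s r x + path_cost cost x rs xs'"
    using update_le[OF cost_nonneg Cons.prems(1)] by simp
  finally show ?case by (simp add: xs)
qed simp

lemma le_mult_cINF:
  fixes C :: real
  assumes "S \<noteq> {}" and "0 \<le> C" and "\<And>x. x \<in> S \<Longrightarrow> a \<le> C * f x"
  shows "a \<le> C * (INF x\<in>S. f x)"
proof (cases "C = 0")
  case True
  then show ?thesis using assms(1,3) by auto
next
  case False
  with assms(2) have "0 < C" by simp
  have "a / C \<le> (INF x\<in>S. f x)"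
    by (rule cINF_greatest) (use assms(1,3) \<open>0 < C\<close> in \<open>auto simp: pos_divide_le_eq mult.commute\<close>)
  with \<open>0 < C\<close> show ?thesis by (simp add: pos_divide_le_eq mult.commute)
qed

theorem mainTheorem7:
  fixes d :: "'x \<Rightarrow> 'x \<Rightarrow> real"
    and cost :: "'x \<Rightarrow> 'r \<Rightarrow> 'x \<Rightarrow> real"
    and s0 :: 'x
    and \<omega>0 :: "'x \<Rightarrow> real"
    and step :: "'x kstate \<Rightarrow> 'r \<Rightarrow> 'x kstate pmf"
    and adjust :: "'x kstate \<Rightarrow> 'r \<Rightarrow> real"
    and C :: real
  assumes d_nonneg: "\<And>x y. 0 \<le> d x y"
    and d_refl: "\<And>x. d x x = 0"
    and d_tri: "\<And>x y z. d x z \<le> d x y + d y z"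
    and cost_nonneg: "\<And>x r y. 0 \<le> cost x r y"
    and cost_tri: "\<And>u x r y v. cost u r v \<le> d u x + cost x r y + d y v"
    and est0: "estimator d \<omega>0"
    and est0_s0: "\<omega>0 s0 = 0"
    and ksa: "is_ksa d cost step adjust"
    and C_nonneg: "0 \<le> C"
    and comp: "ksa_competitive cost step adjust (return_pmf s0, \<omega>0) C"
  shows "competitive cost s0 step (return_pmf s0, \<omega>0) C"
proof -
  let ?k0 = "(return_pmf s0, \<omega>0)"
  obtain K where K: "\<And>rs x. ksa_exp_cost cost step ?k0 rs
      \<le> C * ksa_exp_adjust step adjust ?k0 rs x + K"
    using comp unfolding ksa_competitive_def by blast
  have schedule_bound: "ksa_exp_cost cost step ?k0 rs - K \<le> C * path_cost cost s0 rs xs"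
    if "length xs = length rs" for rs xs
  proof -
    let ?x = "last (s0 # xs)"
    have "ksa_exp_adjust step adjust ?k0 rs ?x \<le> foldl (update cost) \<omega>0 rs ?x"
      using ksa_exp_adjust_le_foldl_update[OF cost_nonneg ksa, of ?k0] est0 by simp
    also have "\<dots> \<le> path_cost cost s0 rs xs"
      using foldl_update_le_path_cost[OF cost_nonneg _ that, where \<omega>=\<omega>0 and s=s0] est0 est0_s0
      by (simp add: estimator_def)
    finally show ?thesis
      using K[of rs ?x] mult_left_mono[OF _ C_nonneg] by fastforce
  qed
  have "ksa_exp_cost cost step ?k0 rs - K \<le> C * cost_opt cost s0 rs" for rs :: "'r list"
    unfolding cost_opt_def
    by (rule le_mult_cINF) (auto intro: schedule_bound C_nonneg exI[of _ "replicate (length rs) s0"])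
  then show ?thesis unfolding competitive_def by (auto intro!: exI[of _ K] simp: algebra_simps)
qed

end
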